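(* Let $1<\alpha<2$, $\omega(x)=x^{\alpha/2}(1-x)^{\alpha/2}$, $G_j(x)=G_j(1+\alpha,1+\alpha/2,x)$, $\lambda_j=-\cos(\pi\alpha/2)\frac{\Gamma(j+1+\alpha)}{\Gamma(j+1)}$. Let $f\in L^2_{\omega}(0,1)$, $f_j=\int_0^1\omega G_j f\,dx$, $u_N=\omega\sum_{j=0}^N \frac{f_j}{\lambda_j\|G_j\|_\omega^2}G_j$ and $u=\omega\sum_{j=0}^\infty \frac{f_j}{\lambda_j\|G_j\|_\omega^2}G_j$ (the limit of $u_N$ in $L^2_{\omega^{-1}}(0,1)$, which solves $\mathcal{L}_{1/2}^{\alpha}u=f$). Then there exists $C>0$ such that for all $N\ge0$, \[ \|u-u_N\|_{\omega^{-1}}\le\frac{1}{\lambda_{N+1}}\|f\|_{\omega}\le C\,(N+2)^{-\alpha}\,\|f\|_{\omega}. \]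
   Context: Let $D=d/dx$. For $\sigma>0$: $\mathbf{D}^{-\sigma}u(x)=\frac{1}{\Gamma(\sigma)}\int_0^x (x-s)^{\sigma-1}u(s)\,ds$, $\mathbf{D}^{-\sigma*}u(x)=\frac{1}{\Gamma(\sigma)}\int_x^1 (s-x)^{\sigma-1}u(s)\,ds$. For $1<\alpha<2$, $\mathbf{D}^{\alpha}u:=D\,\mathbf{D}^{-(2-\alpha)}Du$, $\mathbf{D}^{\alpha*}u:=D\,\mathbf{D}^{-(2-\alpha)*}Du$, $\mathcal{L}_r^{\alpha}u:=-(r\mathbf{D}^{\alpha}u+(1-r)\mathbf{D}^{\alpha*}u)$. Jacobi polynomials on $(0,1)$: $G_n(p,q,x)=\sum_{j=0}^n g_{n,j}x^j$, $g_{n,j}=(-1)^{n-j}\frac{\Gamma(q+n)}{\Gamma(p+2n)}\frac{\Gamma(n+1)}{\Gamma(j+1)\Gamma(n-j+1)}\frac{\Gamma(p+n+j)}{\Gamma(q+j)}$. For a weight $\rho>0$ on $(0,1)$, $L^2_\rho(0,1)=\{f:\int_0^1\rho f^2<\infty\}$ with norm $\|f\|_\rho=(\int_0^1\rho f^2)^{1/2}$. *)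

theory Defs
  imports "HOL-Analysis.Analysis"
begin

definition jacobiG :: "real \<Rightarrow> real \<Rightarrow> nat \<Rightarrow> real \<Rightarrow> real" where
  "jacobiG p q n x = (\<Sum>j\<le>n. (-1) ^ (n - j)
       * (Gamma (q + real n) / Gamma (p + 2 * real n))
       * (Gamma (real n + 1) / (Gamma (real j + 1) * Gamma (real (n - j) + 1)))
       * (Gamma (p + real n + real j) / Gamma (q + real j))
       * x ^ j)"

definition in_L2w :: "(real \<Rightarrow> real) \<Rightarrow> (real \<Rightarrow> real) \<Rightarrow> bool" where
  "in_L2w \<rho> f \<longleftrightarrow> set_borel_measurable lborel {0<..<1} f
      \<and> set_integrable lborel {0<..<1} (\<lambda>x. \<rho> x * (f x)\<^sup>2)"

definition wnorm :: "(real \<Rightarrow> real) \<Rightarrow> (real \<Rightarrow> real) \<Rightarrow> real" where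
  "wnorm \<rho> f = sqrt (LINT x:{0<..<1}|lborel. \<rho> x * (f x)\<^sup>2)"

end

theory Submission
  imports Defs "HOL-Computational_Algebra.Polynomial"
begin

text \<open>
With \<open>\<omega> = x^a (1-x)^a\<close>, the integrals of \<open>\<omega> x^m\<close> are Beta integrals; summed against the
coefficients of \<open>G_n\<close>, the k-th moment (k < n) becomes an n-th finite difference of a polynomial of
degree below n, so the \<open>G_j\<close> are orthogonal in \<open>L^2_\<omega>\<close>. Multiplication by \<open>\<omega>\<close> is an isometry
from \<open>L^2_\<omega>\<close> into \<open>L^2_(1/\<omega>)\<close>, hence \<open>\<parallel>u_M - u_N\<parallel>^2 = \<Sum>(N<j\<le>M) f_j^2 / (\<lambda>_j^2 \<parallel>G_j\<parallel>^2)\<close>,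
which by Bessel's inequality and the monotonicity of \<open>\<lambda>_j\<close> is at most \<open>\<parallel>f\<parallel>^2 / \<lambda>_(N+1)^2\<close>;
letting \<open>M \<rightarrow> \<infinity>\<close> gives the first inequality. The second is \<open>\<Gamma>(x+\<alpha>) / \<Gamma>(x) \<ge> x^\<alpha>\<close>,
a consequence of the log-convexity of \<open>\<Gamma>\<close>.
\<close>

section \<open>Finite differences of polynomials\<close>

lemma degree_diff_pcompose_shift_less:
  fixes P :: "'a::idom poly"
  assumes "degree P > 0"
  shows "degree (P - pcompose P [:1, 1:]) < degree P"
proof (cases "P - pcompose P [:1, 1:] = 0")
  case True
  then show ?thesis using assms by simp
next
  case False
  have "degree (pcompose P [:1, 1:]) = degree P" by (simp add: degree_pcompose)
  moreover have "lead_coeff (pcompose P [:1, 1:]) = lead_coeff P" by (simp add: lead_coeff_comp)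
  ultimately show ?thesis
    using False by (intro degree_less_if_less_eqI) (auto intro: degree_diff_le)
qed

lemma alternating_binomial_sum_Suc:
  fixes f :: "nat \<Rightarrow> 'a::comm_ring_1"
  shows "(\<Sum>j\<le>Suc n. (-1)^j * of_nat (Suc n choose j) * f j)
      = (\<Sum>j\<le>n. (-1)^j * of_nat (n choose j) * (f j - f (Suc j)))"
proof -
  have split: "(\<Sum>j\<le>Suc n. (-1)^j * of_nat (Suc n choose j) * f j)
     = f 0 + (\<Sum>i\<le>n. (-1)^Suc i * of_nat (n choose i) * f (Suc i))
           + (\<Sum>i\<le>n. (-1)^Suc i * of_nat (n choose Suc i) * f (Suc i))"
    by (subst sum.atMost_Suc_shift) (simp add: sum.distrib[symmetric] algebra_simps)
  have shift: "(\<Sum>i\<le>n. (-1)^Suc i * of_nat (n choose Suc i) * f (Suc i))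
      = (\<Sum>j\<le>n. (-1)^j * of_nat (n choose j) * f j) - f 0"
    using sum.atMost_Suc_shift[of "\<lambda>j. (-1)^j * of_nat (n choose j) * f j" n]
    by (simp add: binomial_eq_0 eq_diff_eq add.commute)
  show ?thesis unfolding split shift by (simp add: sum_subtractf sum_negf algebra_simps)
qed

lemma alternating_binomial_sum_poly_eq_0:
  fixes P :: "'a::idom poly"
  assumes "degree P < n"
  shows "(\<Sum>j\<le>n. (-1)^j * of_nat (n choose j) * poly P (of_nat j)) = 0"
  using assms
proof (induction n arbitrary: P)
  case 0
  then show ?case by simp
next
  case (Suc n)
  define Q where "Q = P - pcompose P [:1, 1:]"
  have "poly Q (of_nat j) = poly P (of_nat j) - poly P (of_nat (Suc j))" for j
    by (simp add: Q_def poly_pcompose add.commute)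
  then have sum_eq: "(\<Sum>j\<le>Suc n. (-1)^j * of_nat (Suc n choose j) * poly P (of_nat j))
      = (\<Sum>j\<le>n. (-1)^j * of_nat (n choose j) * poly Q (of_nat j))"
    by (simp only: alternating_binomial_sum_Suc)
  show ?case
  proof (cases "degree P = 0")
    case True
    then obtain c where "P = [:c:]" by (metis degree_eq_zeroE)
    then show ?thesis using sum_eq by (simp add: Q_def)
  next
    case False
    then have "degree Q < n"
      using degree_diff_pcompose_shift_less[of P] Suc.prems by (simp add: Q_def)
    then show ?thesis using sum_eq Suc.IH by simp
  qed
qed

section \<open>Jacobi coefficients and Beta integrals\<close>

definition jacobi_coeff :: "real \<Rightarrow> real \<Rightarrow> nat \<Rightarrow> nat \<Rightarrow> real" where
  "jacobi_coeff p q n j = (-1) ^ (n - j)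
       * (Gamma (q + real n) / Gamma (p + 2 * real n))
       * (Gamma (real n + 1) / (Gamma (real j + 1) * Gamma (real (n - j) + 1)))
       * (Gamma (p + real n + real j) / Gamma (q + real j))"

lemma jacobiG_eq_sum_coeff: "jacobiG p q n x = (\<Sum>j\<le>n. jacobi_coeff p q n j * x ^ j)"
  by (simp add: jacobiG_def jacobi_coeff_def)

lemma pochhammer_eq_poly_prod:
  "pochhammer (z + real j) k = poly (\<Prod>i\<in>{0..<k}. [:z + real i, 1:]) (real j)"
  by (simp add: pochhammer_prod poly_prod algebra_simps)

lemma degree_prod_linear_le: "degree (\<Prod>i\<in>{0..<k}. [:z + real i, 1:]) \<le> k"
proof -
  have "degree (\<Prod>i\<in>{0..<k}. [:z + real i, 1:]) \<le> sum (degree \<circ> (\<lambda>i. [:z + real i, 1:])) {0..<k}"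
    by (rule degree_prod_sum_le) simp
  then show ?thesis by simp
qed

lemma Gamma_of_nat_plus_1: "Gamma (real n + 1) = fact n"
  using Gamma_fact[of n, where 'a=real] by (simp add: add.commute)

lemma minus_one_power_diff:
  assumes "j \<le> n"
  shows "(-1::real) ^ (n - j) = (-1) ^ n * (-1) ^ j"
proof -
  have "(-1::real) ^ n = (-1) ^ (n - j) * (-1) ^ j" using assms by (simp add: power_add[symmetric])
  then have "(-1::real) ^ n * (-1) ^ j = (-1) ^ (n - j) * ((-1) ^ j * (-1) ^ j)" by simp
  also have "(-1::real) ^ j * (-1) ^ j = 1" by (simp add: power_add[symmetric] flip: power_mult_distrib)
  finally show ?thesis by simp
qed

text \<open>
Up to a factor independent of j, \<open>g_(n,j) B(q+j+k, q)\<close> is the j-th term of an n-th finite difference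
of the polynomial \<open>P(j) = (q+j)_k (p+1+k+j)_(n-1-k)\<close> (Pochhammer symbols).
\<close>

lemma jacobi_coeff_times_Beta:
  fixes a :: real
  assumes a: "a > 0" and jn: "j \<le> n" and kn: "k < n"
  defines "p \<equiv> 1 + 2 * a" and "q \<equiv> 1 + a"
  defines "P \<equiv> (\<Prod>i\<in>{0..<k}. [:q + real i, 1:]) * (\<Prod>i\<in>{0..<n - 1 - k}. [:p + 1 + real k + real i, 1:])"
  shows "jacobi_coeff p q n j * Beta (q + real j + real k) q
       = (Gamma (q + real n) / Gamma (p + 2 * real n) * Gamma q * (-1) ^ n)
         * ((-1) ^ j * real (n choose j) * poly P (real j))"
proof -
  define z1 where "z1 = q + real j"
  define z2 where "z2 = p + 1 + real j + real k"
  have z1: "z1 > 0" and z2: "z2 > 0" using a by (auto simp: z1_def z2_def p_def q_def)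
  then have "z1 \<notin> \<int>\<^sub>\<le>\<^sub>0" "z2 \<notin> \<int>\<^sub>\<le>\<^sub>0" by auto
  have poch1: "pochhammer z1 k = Gamma (q + real j + real k) / Gamma (q + real j)"
    using pochhammer_Gamma[of z1 k] \<open>z1 \<notin> \<int>\<^sub>\<le>\<^sub>0\<close> by (simp add: z1_def)
  have "z2 + real (n - 1 - k) = p + real n + real j" using kn by (simp add: z2_def algebra_simps)
  then have poch2: "pochhammer z2 (n - 1 - k) = Gamma (p + real n + real j) / Gamma z2"
    using pochhammer_Gamma[of z2 "n - 1 - k"] \<open>z2 \<notin> \<int>\<^sub>\<le>\<^sub>0\<close> by simp
  have binom: "Gamma (real n + 1) / (Gamma (real j + 1) * Gamma (real (n - j) + 1)) = real (n choose j)"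
    using jn Gamma_of_nat_plus_1[of "n - j"] by (simp add: Gamma_of_nat_plus_1 binomial_fact of_nat_diff del: of_nat_diff_if)
  have Beta: "Beta (q + real j + real k) q = Gamma (q + real j + real k) * Gamma q / Gamma z2"
    unfolding Beta_def by (simp add: z2_def p_def q_def algebra_simps)
  have P: "poly P (real j) = pochhammer z1 k * pochhammer z2 (n - 1 - k)"
    unfolding P_def poly_mult pochhammer_eq_poly_prod[symmetric] by (simp add: z1_def z2_def add_ac)
  have "Gamma (q + real j) \<noteq> 0" "Gamma z2 \<noteq> 0"
    using Gamma_real_pos[OF z1] Gamma_real_pos[OF z2] by (auto simp: z1_def)
  then show ?thesis
    unfolding P poch1 poch2 jacobi_coeff_def Beta binom minus_one_power_diff[OF jn]
    by (simp add: field_simps z2_def)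
qed

lemma jacobi_coeff_Beta_sum_eq_0:
  fixes a :: real
  assumes a: "a > 0" and kn: "k < n"
  shows "(\<Sum>j\<le>n. jacobi_coeff (1 + 2 * a) (1 + a) n j * Beta (1 + a + real j + real k) (1 + a)) = 0"
proof -
  define p where "p = 1 + 2 * a"
  define q where "q = 1 + a"
  define P where "P = (\<Prod>i\<in>{0..<k}. [:q + real i, 1:]) * (\<Prod>i\<in>{0..<n - 1 - k}. [:p + 1 + real k + real i, 1:])"
  define K where "K = Gamma (q + real n) / Gamma (p + 2 * real n) * Gamma q * (-1) ^ n"
  have "degree P \<le> k + (n - 1 - k)"
    unfolding P_def by (rule order.trans[OF degree_mult_le add_mono[OF degree_prod_linear_le degree_prod_linear_le]])
  then have deg: "degree P < n" using kn by simp
  have "(\<Sum>j\<le>n. jacobi_coeff p q n j * Beta (q + real j + real k) q)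
      = K * (\<Sum>j\<le>n. (-1) ^ j * real (n choose j) * poly P (real j))"
    unfolding sum_distrib_left
    by (rule sum.cong) (use jacobi_coeff_times_Beta[OF a _ kn] in \<open>auto simp: p_def q_def P_def K_def\<close>)
  also have "\<dots> = 0" using alternating_binomial_sum_poly_eq_0[OF deg] by simp
  finally show ?thesis by (simp add: p_def q_def)
qed

section \<open>Weighted \<open>L\<^sup>2\<close> spaces\<close>

definition L2_weighted :: "'a measure \<Rightarrow> ('a \<Rightarrow> real) \<Rightarrow> ('a \<Rightarrow> real) \<Rightarrow> bool" where
  "L2_weighted M \<rho> f \<longleftrightarrow> f \<in> borel_measurable M \<and> integrable M (\<lambda>x. \<rho> x * (f x)\<^sup>2)"

definition L2_inner :: "'a measure \<Rightarrow> ('a \<Rightarrow> real) \<Rightarrow> ('a \<Rightarrow> real) \<Rightarrow> ('a \<Rightarrow> real) \<Rightarrow> real" where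
  "L2_inner M \<rho> f g = (\<integral>x. \<rho> x * f x * g x \<partial>M)"

locale L2_weight =
  fixes M :: "'a measure" and \<rho> :: "'a \<Rightarrow> real"
  assumes weight_measurable[measurable]: "\<rho> \<in> borel_measurable M"
    and weight_nonneg: "\<And>x. x \<in> space M \<Longrightarrow> \<rho> x \<ge> 0"
begin

abbreviation L2 where "L2 \<equiv> L2_weighted M \<rho>"

abbreviation ip where "ip \<equiv> L2_inner M \<rho>"

lemma L2_integrable_product:
  assumes "L2 f" "L2 g"
  shows "integrable M (\<lambda>x. \<rho> x * f x * g x)"
proof (rule Bochner_Integration.integrable_bound)
  show "integrable M (\<lambda>x. \<rho> x * (f x)\<^sup>2 + \<rho> x * (g x)\<^sup>2)"
    using assms unfolding L2_weighted_def by auto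
  have [measurable]: "f \<in> borel_measurable M" "g \<in> borel_measurable M"
    using assms unfolding L2_weighted_def by auto
  show "(\<lambda>x. \<rho> x * f x * g x) \<in> borel_measurable M" by measurable
  show "AE x in M. norm (\<rho> x * f x * g x) \<le> norm (\<rho> x * (f x)\<^sup>2 + \<rho> x * (g x)\<^sup>2)"
  proof (rule AE_I2)
    fix x assume x: "x \<in> space M"
    have "2 * (\<bar>f x\<bar> * \<bar>g x\<bar>) \<le> (f x)\<^sup>2 + (g x)\<^sup>2"
      using sum_squares_bound[of "\<bar>f x\<bar>" "\<bar>g x\<bar>"] by (simp add: mult.assoc)
    then have "\<bar>f x * g x\<bar> \<le> (f x)\<^sup>2 + (g x)\<^sup>2"
      unfolding abs_mult using zero_le_mult_iff[of "\<bar>f x\<bar>" "\<bar>g x\<bar>"] by linarith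
    then have "\<rho> x * \<bar>f x * g x\<bar> \<le> \<rho> x * ((f x)\<^sup>2 + (g x)\<^sup>2)"
      using weight_nonneg[OF x] by (rule mult_left_mono)
    then show "norm (\<rho> x * f x * g x) \<le> norm (\<rho> x * (f x)\<^sup>2 + \<rho> x * (g x)\<^sup>2)"
      using weight_nonneg[OF x] by (simp add: abs_mult algebra_simps)
  qed
qed

lemma L2_add:
  assumes "L2 f" "L2 g"
  shows "L2 (\<lambda>x. f x + g x)"
proof -
  have "integrable M (\<lambda>x. \<rho> x * (f x)\<^sup>2 + 2 * (\<rho> x * f x * g x) + \<rho> x * (g x)\<^sup>2)"
    using assms L2_integrable_product[OF assms] unfolding L2_weighted_def by auto
  moreover have "(\<lambda>x. \<rho> x * (f x)\<^sup>2 + 2 * (\<rho> x * f x * g x) + \<rho> x * (g x)\<^sup>2) = (\<lambda>x. \<rho> x * (f x + g x)\<^sup>2)"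
    by (auto simp: power2_eq_square algebra_simps)
  ultimately show ?thesis using assms unfolding L2_weighted_def by auto
qed

lemma L2_mult_left:
  assumes "L2 f"
  shows "L2 (\<lambda>x. c * f x)"
proof -
  have "integrable M (\<lambda>x. c\<^sup>2 * (\<rho> x * (f x)\<^sup>2))" using assms unfolding L2_weighted_def by auto
  moreover have "(\<lambda>x. c\<^sup>2 * (\<rho> x * (f x)\<^sup>2)) = (\<lambda>x. \<rho> x * (c * f x)\<^sup>2)"
    by (auto simp: power2_eq_square algebra_simps)
  ultimately show ?thesis using assms unfolding L2_weighted_def by auto
qed

lemma L2_diff:
  assumes "L2 f" "L2 g"
  shows "L2 (\<lambda>x. f x - g x)"
  using L2_add[OF assms(1) L2_mult_left[OF assms(2), of "-1"]] by simp

lemma L2_sum: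
  assumes "finite J" "\<And>j. j \<in> J \<Longrightarrow> L2 (\<phi> j)"
  shows "L2 (\<lambda>x. \<Sum>j\<in>J. c j * \<phi> j x)"
  using assms
proof (induction J rule: finite_induct)
  case empty
  then show ?case by (simp add: L2_weighted_def)
next
  case (insert j J)
  then have "L2 (\<lambda>x. c j * \<phi> j x + (\<Sum>j\<in>J. c j * \<phi> j x))"
    by (intro L2_add L2_mult_left) auto
  then show ?case using insert by simp
qed

lemma ip_self: "ip f f = (\<integral>x. \<rho> x * (f x)\<^sup>2 \<partial>M)"
  unfolding L2_inner_def by (simp add: power2_eq_square mult.assoc)

lemma ip_self_nonneg: "ip f f \<ge> 0"
  unfolding ip_self by (rule integral_nonneg_AE) (auto intro!: AE_I2 mult_nonneg_nonneg weight_nonneg)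

lemma ip_commute: "ip f g = ip g f"
  unfolding L2_inner_def by (simp add: mult_ac)

lemma ip_add_scaled_self:
  assumes "L2 f" "L2 g"
  shows "ip (\<lambda>x. f x + t * g x) (\<lambda>x. f x + t * g x) = ip f f + 2 * t * ip f g + t\<^sup>2 * ip g g"
proof -
  have "ip (\<lambda>x. f x + t * g x) (\<lambda>x. f x + t * g x)
     = (\<integral>x. \<rho> x * f x * f x + (2 * t) * (\<rho> x * f x * g x) + t\<^sup>2 * (\<rho> x * g x * g x) \<partial>M)"
    unfolding L2_inner_def
    by (rule Bochner_Integration.integral_cong) (auto simp: power2_eq_square algebra_simps)
  then show ?thesis
    unfolding L2_inner_def
    using L2_integrable_product[OF assms(1) assms(1)] L2_integrable_product[OF assms(1) assms(2)]
      L2_integrable_product[OF assms(2) assms(2)]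
    by simp
qed

lemma ip_Cauchy_Schwarz:
  assumes "L2 f" "L2 g"
  shows "\<bar>ip f g\<bar> \<le> sqrt (ip f f) * sqrt (ip g g)"
proof -
  have quadratic_nonneg: "0 \<le> ip f f + 2 * t * ip f g + t\<^sup>2 * ip g g" for t
    using ip_add_scaled_self[OF assms, of t] ip_self_nonneg[of "\<lambda>x. f x + t * g x"] by simp
  have "(ip f g)\<^sup>2 \<le> ip f f * ip g g"
  proof (cases "ip g g = 0")
    case True
    have "ip f g = 0"
    proof (rule ccontr)
      assume ne: "ip f g \<noteq> 0"
      have "0 \<le> ip f f + 2 * (- (ip f f + 1) / (2 * ip f g)) * ip f g"
        using quadratic_nonneg[of "- (ip f f + 1) / (2 * ip f g)"] True by simp
      also have "\<dots> = -1" using ne by (simp add: field_simps)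
      finally show False by simp
    qed
    then show ?thesis using True by simp
  next
    case False
    then have pos: "ip g g > 0" using ip_self_nonneg[of g] by simp
    have "0 \<le> ip f f + 2 * (- ip f g / ip g g) * ip f g + (- ip f g / ip g g)\<^sup>2 * ip g g"
      by (rule quadratic_nonneg)
    also have "\<dots> = ip f f - (ip f g)\<^sup>2 / ip g g" using pos by (simp add: field_simps power2_eq_square)
    finally show ?thesis using pos by (simp add: field_simps)
  qed
  then have "sqrt ((ip f g)\<^sup>2) \<le> sqrt (ip f f * ip g g)" by (rule real_sqrt_le_mono)
  then show ?thesis by (simp add: real_sqrt_mult)
qed

lemma sqrt_ip_add_le:
  assumes "L2 f" "L2 g"
  shows "sqrt (ip (\<lambda>x. f x + g x) (\<lambda>x. f x + g x)) \<le> sqrt (ip f f) + sqrt (ip g g)"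
proof -
  have nonneg: "ip f f \<ge> 0" "ip g g \<ge> 0" by (rule ip_self_nonneg)+
  have "ip (\<lambda>x. f x + g x) (\<lambda>x. f x + g x) = ip f f + 2 * ip f g + ip g g"
    using ip_add_scaled_self[OF assms, of 1] by simp
  also have "\<dots> \<le> (sqrt (ip f f) + sqrt (ip g g))\<^sup>2"
    using ip_Cauchy_Schwarz[OF assms] nonneg by (simp add: power2_eq_square algebra_simps)
  finally have "sqrt (ip (\<lambda>x. f x + g x) (\<lambda>x. f x + g x)) \<le> sqrt ((sqrt (ip f f) + sqrt (ip g g))\<^sup>2)"
    by (rule real_sqrt_le_mono)
  then show ?thesis using nonneg by simp
qed

lemma ip_sum_right:
  assumes "finite J" "L2 f" "\<And>j. j \<in> J \<Longrightarrow> L2 (\<phi> j)"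
  shows "ip f (\<lambda>x. \<Sum>j\<in>J. c j * \<phi> j x) = (\<Sum>j\<in>J. c j * ip f (\<phi> j))"
proof -
  have "ip f (\<lambda>x. \<Sum>j\<in>J. c j * \<phi> j x) = (\<integral>x. (\<Sum>j\<in>J. c j * (\<rho> x * f x * \<phi> j x)) \<partial>M)"
    unfolding L2_inner_def by (simp add: sum_distrib_left mult_ac)
  also have "\<dots> = (\<Sum>j\<in>J. c j * ip f (\<phi> j))"
    unfolding L2_inner_def
    by (subst Bochner_Integration.integral_sum) (use L2_integrable_product[OF assms(2) assms(3)] in auto)
  finally show ?thesis .
qed

lemma ip_orthogonal_sums:
  assumes J: "finite J" and L: "\<And>j. j \<in> J \<Longrightarrow> L2 (\<phi> j)"
    and orth: "\<And>i j. i \<in> J \<Longrightarrow> j \<in> J \<Longrightarrow> i \<noteq> j \<Longrightarrow> ip (\<phi> i) (\<phi> j) = 0"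
  shows "ip (\<lambda>x. \<Sum>j\<in>J. c j * \<phi> j x) (\<lambda>x. \<Sum>j\<in>J. d j * \<phi> j x)
       = (\<Sum>j\<in>J. c j * d j * ip (\<phi> j) (\<phi> j))"
proof -
  have "ip (\<lambda>x. \<Sum>j\<in>J. c j * \<phi> j x) (\<phi> i) = c i * ip (\<phi> i) (\<phi> i)" if i: "i \<in> J" for i
  proof -
    have "ip (\<lambda>x. \<Sum>j\<in>J. c j * \<phi> j x) (\<phi> i) = (\<Sum>j\<in>J. c j * ip (\<phi> i) (\<phi> j))"
      by (subst ip_commute) (rule ip_sum_right[OF J L[OF i] L])
    also have "\<dots> = c i * ip (\<phi> i) (\<phi> i) + (\<Sum>j\<in>J - {i}. c j * ip (\<phi> i) (\<phi> j))"
      by (rule sum.remove[OF J i])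
    also have "(\<Sum>j\<in>J - {i}. c j * ip (\<phi> i) (\<phi> j)) = 0"
      by (rule sum.neutral) (use orth i in auto)
    finally show ?thesis by simp
  qed
  then show ?thesis
    by (simp add: ip_sum_right[OF J L2_sum[OF J L] L] mult_ac cong: sum.cong)
qed

lemma Bessel_inequality:
  assumes J: "finite J" and L: "\<And>j. j \<in> J \<Longrightarrow> L2 (\<phi> j)"
    and orth: "\<And>i j. i \<in> J \<Longrightarrow> j \<in> J \<Longrightarrow> i \<noteq> j \<Longrightarrow> ip (\<phi> i) (\<phi> j) = 0"
    and f: "L2 f"
  shows "(\<Sum>j\<in>J. (ip (\<phi> j) f / ip (\<phi> j) (\<phi> j))\<^sup>2 * ip (\<phi> j) (\<phi> j)) \<le> ip f f"
proof -
  define c where "c j = ip (\<phi> j) f / ip (\<phi> j) (\<phi> j)" for j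
  define T where "T = (\<lambda>x. \<Sum>j\<in>J. c j * \<phi> j x)"
  have LT: "L2 T" unfolding T_def by (rule L2_sum[OF J L])
  have coeff: "c j * ip (\<phi> j) f = (c j)\<^sup>2 * ip (\<phi> j) (\<phi> j)" for j
    by (cases "ip (\<phi> j) (\<phi> j) = 0") (auto simp: c_def power2_eq_square)
  have "ip f T = (\<Sum>j\<in>J. c j * ip f (\<phi> j))" unfolding T_def by (rule ip_sum_right[OF J f L])
  also have "\<dots> = (\<Sum>j\<in>J. c j * ip (\<phi> j) f)" by (simp only: ip_commute[of f])
  also have "\<dots> = (\<Sum>j\<in>J. (c j)\<^sup>2 * ip (\<phi> j) (\<phi> j))" by (simp add: coeff)
  finally have fT: "ip f T = (\<Sum>j\<in>J. (c j)\<^sup>2 * ip (\<phi> j) (\<phi> j))" .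
  have TT: "ip T T = (\<Sum>j\<in>J. (c j)\<^sup>2 * ip (\<phi> j) (\<phi> j))"
    unfolding T_def by (simp add: ip_orthogonal_sums[OF J L orth] power2_eq_square)
  have "0 \<le> ip (\<lambda>x. f x + (-1) * T x) (\<lambda>x. f x + (-1) * T x)" by (rule ip_self_nonneg)
  also have "\<dots> = ip f f - 2 * ip f T + ip T T" using ip_add_scaled_self[OF f LT, of "-1"] by simp
  finally show ?thesis unfolding fT TT c_def by simp
qed

lemma ip_spectral_tail_le:
  fixes N K :: nat
  assumes L: "\<And>j. L2 (\<phi> j)" and orth: "\<And>i j. i \<noteq> j \<Longrightarrow> ip (\<phi> i) (\<phi> j) = 0" and f: "L2 f"
    and lam_pos: "\<And>j. lam j > 0" and lam_mono: "mono lam"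
  defines "S \<equiv> \<lambda>x. \<Sum>j\<in>{N<..K}. ip (\<phi> j) f / (lam j * ip (\<phi> j) (\<phi> j)) * \<phi> j x"
  shows "ip S S \<le> ip f f / (lam (Suc N))\<^sup>2"
proof -
  define c where "c j = ip (\<phi> j) f / ip (\<phi> j) (\<phi> j)" for j
  have h_nonneg: "0 \<le> (c j)\<^sup>2 * ip (\<phi> j) (\<phi> j)" for j by (simp add: ip_self_nonneg)
  define d where "d j = ip (\<phi> j) f / (lam j * ip (\<phi> j) (\<phi> j))" for j
  have "ip S S = (\<Sum>j\<in>{N<..K}. d j * d j * ip (\<phi> j) (\<phi> j))"
    unfolding S_def d_def by (rule ip_orthogonal_sums) (auto intro: L orth)
  also have "\<dots> = (\<Sum>j\<in>{N<..K}. (c j)\<^sup>2 * ip (\<phi> j) (\<phi> j) / (lam j)\<^sup>2)"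
  proof (rule sum.cong[OF refl])
    fix j
    show "d j * d j * ip (\<phi> j) (\<phi> j) = (c j)\<^sup>2 * ip (\<phi> j) (\<phi> j) / (lam j)\<^sup>2"
      using lam_pos[of j] unfolding c_def d_def
      by (cases "ip (\<phi> j) (\<phi> j) = 0") (simp_all add: field_simps power2_eq_square)
  qed
  also have "\<dots> \<le> (\<Sum>j\<in>{N<..K}. (c j)\<^sup>2 * ip (\<phi> j) (\<phi> j) / (lam (Suc N))\<^sup>2)"
  proof (rule sum_mono)
    fix j assume "j \<in> {N<..K}"
    then have "lam (Suc N) \<le> lam j" using lam_mono by (auto intro: monoD)
    then have "(lam (Suc N))\<^sup>2 \<le> (lam j)\<^sup>2" using lam_pos by (intro power_mono) (auto intro: less_imp_le)
    then show "(c j)\<^sup>2 * ip (\<phi> j) (\<phi> j) / (lam j)\<^sup>2 \<le> (c j)\<^sup>2 * ip (\<phi> j) (\<phi> j) / (lam (Suc N))\<^sup>2"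
      using lam_pos[of j] lam_pos[of "Suc N"] h_nonneg by (intro divide_left_mono) auto
  qed
  also have "\<dots> \<le> (\<Sum>j\<le>K. (c j)\<^sup>2 * ip (\<phi> j) (\<phi> j)) / (lam (Suc N))\<^sup>2"
    unfolding sum_divide_distrib[symmetric] by (intro divide_right_mono sum_mono2) (auto simp: h_nonneg)
  also have "\<dots> \<le> ip f f / (lam (Suc N))\<^sup>2"
    unfolding c_def using L orth f by (intro divide_right_mono Bessel_inequality) auto
  finally show ?thesis .
qed

lemma sqrt_ip_diff_le_of_tendsto:
  assumes u: "L2 u" and v: "\<And>k. L2 (v k)"
    and lim: "(\<lambda>k. sqrt (ip (\<lambda>x. u x - v k x) (\<lambda>x. u x - v k x))) \<longlonglongrightarrow> 0"
    and bound: "\<And>k. N \<le> k \<Longrightarrow> sqrt (ip (\<lambda>x. v k x - v N x) (\<lambda>x. v k x - v N x)) \<le> B"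
  shows "sqrt (ip (\<lambda>x. u x - v N x) (\<lambda>x. u x - v N x)) \<le> B"
proof -
  have "sqrt (ip (\<lambda>x. u x - v N x) (\<lambda>x. u x - v N x)) - B \<le> 0"
  proof (rule LIMSEQ_le_const[OF lim], intro exI allI impI)
    fix k assume NM: "N \<le> k"
    have split: "(\<lambda>x. (u x - v k x) + (v k x - v N x)) = (\<lambda>x. u x - v N x)" by auto
    have "sqrt (ip (\<lambda>x. u x - v N x) (\<lambda>x. u x - v N x))
        \<le> sqrt (ip (\<lambda>x. u x - v k x) (\<lambda>x. u x - v k x)) + sqrt (ip (\<lambda>x. v k x - v N x) (\<lambda>x. v k x - v N x))"
      using sqrt_ip_add_le[OF L2_diff[OF u v[of k]] L2_diff[OF v[of k] v[of N]]] unfolding split .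
    then show "sqrt (ip (\<lambda>x. u x - v N x) (\<lambda>x. u x - v N x)) - B \<le> sqrt (ip (\<lambda>x. u x - v k x) (\<lambda>x. u x - v k x))"
      using bound[OF NM] by simp
  qed
  then show ?thesis by simp
qed

lemma mult_weight_isometry:
  assumes pos: "\<And>x. x \<in> space M \<Longrightarrow> \<rho> x > 0" and S: "L2 S"
  shows "L2_weighted M (\<lambda>x. 1 / \<rho> x) (\<lambda>x. \<rho> x * S x)"
    and "L2_inner M (\<lambda>x. 1 / \<rho> x) (\<lambda>x. \<rho> x * S x) (\<lambda>x. \<rho> x * S x) = ip S S"
proof -
  have [measurable]: "S \<in> borel_measurable M" using S unfolding L2_weighted_def by simp
  have eq: "1 / \<rho> x * (\<rho> x * S x)\<^sup>2 = \<rho> x * (S x)\<^sup>2" if "x \<in> space M" for x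
    using pos[OF that] by (simp add: power2_eq_square field_simps)
  have "integrable M (\<lambda>x. 1 / \<rho> x * (\<rho> x * S x)\<^sup>2)"
    using S unfolding L2_weighted_def by (subst Bochner_Integration.integrable_cong[OF refl eq]) auto
  then show "L2_weighted M (\<lambda>x. 1 / \<rho> x) (\<lambda>x. \<rho> x * S x)" unfolding L2_weighted_def by simp
  have "L2_inner M (\<lambda>x. 1 / \<rho> x) (\<lambda>x. \<rho> x * S x) (\<lambda>x. \<rho> x * S x) = (\<integral>x. 1 / \<rho> x * (\<rho> x * S x)\<^sup>2 \<partial>M)"
    unfolding L2_inner_def by (simp only: power2_eq_square mult.assoc)
  also have "\<dots> = ip S S" unfolding ip_self by (rule Bochner_Integration.integral_cong[OF refl eq])
  finally show "L2_inner M (\<lambda>x. 1 / \<rho> x) (\<lambda>x. \<rho> x * S x) (\<lambda>x. \<rho> x * S x) = ip S S" .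
qed

end

abbreviation lborel_01 :: "real measure" where
  "lborel_01 \<equiv> restrict_space lborel {0<..<1}"

lemma set_integrable_Ioo01_iff:
  "set_integrable lborel {0<..<1::real} f \<longleftrightarrow> integrable lborel_01 f" for f :: "real \<Rightarrow> real"
  by (simp add: set_integrable_def integrable_restrict_space)

lemma set_integral_Ioo01_eq:
  "(LINT x:{0<..<1::real}|lborel. f x) = integral\<^sup>L lborel_01 f" for f :: "real \<Rightarrow> real"
  by (simp add: set_lebesgue_integral_def integral_restrict_space)

lemma in_L2w_iff_L2_weighted: "in_L2w \<rho> f \<longleftrightarrow> L2_weighted lborel_01 \<rho> f"
  by (simp add: in_L2w_def L2_weighted_def set_integrable_Ioo01_iff set_borel_measurable_def
      borel_measurable_restrict_space_iff)

lemma wnorm_eq_sqrt_L2_inner: "wnorm \<rho> f = sqrt (L2_inner lborel_01 \<rho> f f)"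
  unfolding wnorm_def set_integral_Ioo01_eq L2_inner_def by (simp add: power2_eq_square mult.assoc)

lemma wnorm_nonneg:
  assumes "\<And>x. 0 < x \<Longrightarrow> x < 1 \<Longrightarrow> \<rho> x \<ge> 0"
  shows "wnorm \<rho> f \<ge> 0"
  unfolding wnorm_def set_integral_Ioo01_eq
  using assms by (intro real_sqrt_ge_zero integral_nonneg_AE AE_I2) (simp add: space_restrict_space)

lemma set_integral_weighted_product_eq_L2_inner:
  "(LINT x:{0<..<1}|lborel. \<rho> x * g x * f x) = L2_inner lborel_01 \<rho> g f"
  unfolding set_integral_Ioo01_eq L2_inner_def ..

lemma orthogonal_expansion_truncation_error:
  fixes \<omega> :: "real \<Rightarrow> real" and G :: "nat \<Rightarrow> real \<Rightarrow> real" and lam :: "nat \<Rightarrow> real"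
  assumes \<omega>_meas: "\<omega> \<in> borel_measurable lborel_01" and \<omega>_pos: "\<And>x. 0 < x \<Longrightarrow> x < 1 \<Longrightarrow> \<omega> x > 0"
    and G: "\<And>j. in_L2w \<omega> (G j)"
    and orth: "\<And>i j. i \<noteq> j \<Longrightarrow> (LINT x:{0<..<1}|lborel. \<omega> x * G i x * G j x) = 0"
    and lam_pos: "\<And>j. lam j > 0" and lam_mono: "mono lam"
    and f: "in_L2w \<omega> f"
    and fc: "\<And>j. fc j = (LINT x:{0<..<1}|lborel. \<omega> x * G j x * f x)"
    and uN: "\<And>N x. uN N x = \<omega> x * (\<Sum>j\<le>N. fc j / (lam j * (wnorm \<omega> (G j))\<^sup>2) * G j x)"
    and u: "in_L2w (\<lambda>x. 1 / \<omega> x) u"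
    and lim: "(\<lambda>N. wnorm (\<lambda>x. 1 / \<omega> x) (\<lambda>x. u x - uN N x)) \<longlonglongrightarrow> 0"
  shows "wnorm (\<lambda>x. 1 / \<omega> x) (\<lambda>x. u x - uN N x) \<le> 1 / lam (N + 1) * wnorm \<omega> f"
proof -
  have \<omega>_pos': "\<omega> x > 0" if "x \<in> space lborel_01" for x
    using that \<omega>_pos by (simp add: space_restrict_space)
  interpret W: L2_weight lborel_01 \<omega>
    using \<omega>_meas \<omega>_pos' by unfold_locales (auto simp: less_imp_le)
  interpret V: L2_weight lborel_01 "\<lambda>x. 1 / \<omega> x"
    using \<omega>_meas \<omega>_pos' by unfold_locales (auto simp: less_imp_le)
  have LG: "W.L2 (G j)" for j using G by (simp add: in_L2w_iff_L2_weighted)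
  have Lf: "W.L2 f" using f by (simp add: in_L2w_iff_L2_weighted)
  have Lu: "V.L2 u" using u by (simp add: in_L2w_iff_L2_weighted)
  have orth': "W.ip (G i) (G j) = 0" if "i \<noteq> j" for i j
    using orth[OF that] by (simp add: set_integral_weighted_product_eq_L2_inner)
  define c where "c j = W.ip (G j) f / (lam j * W.ip (G j) (G j))" for j
  have uN_eq: "uN N = (\<lambda>x. \<omega> x * (\<Sum>j\<le>N. c j * G j x))" for N
    using uN fc W.ip_self_nonneg
    by (simp add: fun_eq_iff c_def wnorm_eq_sqrt_L2_inner set_integral_weighted_product_eq_L2_inner)
  have LuN: "V.L2 (uN N)" for N
    unfolding uN_eq using \<omega>_pos' LG by (intro W.mult_weight_isometry(1) W.L2_sum) auto
  have tail: "sqrt (V.ip (\<lambda>x. uN K x - uN N x) (\<lambda>x. uN K x - uN N x)) \<le> 1 / lam (N + 1) * wnorm \<omega> f"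
    if "N \<le> K" for N K
  proof -
    have "{..K} = {..N} \<union> {N<..K}" "{..N} \<inter> {N<..K} = {}" using that by auto
    then have diff: "(\<lambda>x. uN K x - uN N x) = (\<lambda>x. \<omega> x * (\<Sum>j\<in>{N<..K}. c j * G j x))"
      unfolding uN_eq by (simp add: fun_eq_iff sum.union_disjoint algebra_simps)
    have "V.ip (\<lambda>x. uN K x - uN N x) (\<lambda>x. uN K x - uN N x)
        = W.ip (\<lambda>x. \<Sum>j\<in>{N<..K}. c j * G j x) (\<lambda>x. \<Sum>j\<in>{N<..K}. c j * G j x)"
      unfolding diff using \<omega>_pos' LG by (intro W.mult_weight_isometry(2) W.L2_sum) auto
    also have "\<dots> \<le> W.ip f f / (lam (Suc N))\<^sup>2"
      unfolding c_def using LG orth' Lf lam_pos lam_mono by (rule W.ip_spectral_tail_le)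
    finally have "sqrt (V.ip (\<lambda>x. uN K x - uN N x) (\<lambda>x. uN K x - uN N x)) \<le> sqrt (W.ip f f / (lam (Suc N))\<^sup>2)"
      by (rule real_sqrt_le_mono)
    then show ?thesis
      using lam_pos[of "Suc N"] by (simp add: wnorm_eq_sqrt_L2_inner real_sqrt_divide)
  qed
  have "sqrt (V.ip (\<lambda>x. u x - uN N x) (\<lambda>x. u x - uN N x)) \<le> 1 / lam (N + 1) * wnorm \<omega> f"
    using lim by (intro V.sqrt_ip_diff_le_of_tendsto[of u uN, OF Lu LuN _ tail])
      (simp_all add: wnorm_eq_sqrt_L2_inner)
  then show ?thesis by (simp add: wnorm_eq_sqrt_L2_inner)
qed

section \<open>The Jacobi polynomials are orthogonal\<close>

lemma Beta_weight_moment: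
  fixes a :: real
  assumes a: "a > 0"
  shows "integrable lborel_01 (\<lambda>x. x powr a * (1 - x) powr a * x ^ m)"
    and "integral\<^sup>L lborel_01 (\<lambda>x. x powr a * (1 - x) powr a * x ^ m) = Beta (1 + a + real m) (1 + a)"
proof -
  have "set_integrable lborel {0..1} (\<lambda>t. t powr (1 + a + real m - 1) * (1 - t) powr (1 + a - 1))"
    by (rule integrable_Beta) (use a in auto)
  then have int: "set_integrable lborel {0<..<1::real} (\<lambda>t. t powr (1 + a + real m - 1) * (1 - t) powr (1 + a - 1))"
    by (rule set_integrable_subset) auto
  have eq: "t powr (1 + a + real m - 1) * (1 - t) powr (1 + a - 1) = t powr a * (1 - t) powr a * t ^ m"
    if "t \<in> {0<..<1}" for t :: real
    using that by (simp add: powr_add powr_realpow algebra_simps)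
  have "set_integrable lborel {0<..<1::real} (\<lambda>t. t powr a * (1 - t) powr a * t ^ m)"
    using int by (subst (asm) set_integrable_cong[OF refl refl eq]) auto
  then show "integrable lborel_01 (\<lambda>x. x powr a * (1 - x) powr a * x ^ m)"
    by (simp add: set_integrable_Ioo01_iff)
  have "(LINT t:{0<..<1::real}|lborel. t powr a * (1 - t) powr a * t ^ m)
      = (LINT t:{0<..<1::real}|lborel. t powr (1 + a + real m - 1) * (1 - t) powr (1 + a - 1))"
    by (rule set_lebesgue_integral_cong) (simp, use eq in metis)
  also have "\<dots> = integral {0..1} (\<lambda>t. t powr (1 + a + real m - 1) * (1 - t) powr (1 + a - 1))"
    by (subst set_borel_integral_eq_integral(2)[OF int]) (simp add: integral_open_interval_real)
  also have "\<dots> = Beta (1 + a + real m) (1 + a)"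
    by (rule integral_unique[OF has_integral_Beta_real]) (use a in auto)
  finally show "integral\<^sup>L lborel_01 (\<lambda>x. x powr a * (1 - x) powr a * x ^ m) = Beta (1 + a + real m) (1 + a)"
    by (simp add: set_integral_Ioo01_eq)
qed

lemma jacobi_moment:
  fixes a :: real
  assumes a: "a > 0"
  defines "J \<equiv> jacobiG (1 + 2 * a) (1 + a)"
  shows "integrable lborel_01 (\<lambda>x. x powr a * (1 - x) powr a * J n x * x ^ k)"
    and "k < n \<Longrightarrow> integral\<^sup>L lborel_01 (\<lambda>x. x powr a * (1 - x) powr a * J n x * x ^ k) = 0"
proof -
  have eq: "(\<lambda>x. x powr a * (1 - x) powr a * J n x * x ^ k)
      = (\<lambda>x. \<Sum>j\<le>n. jacobi_coeff (1 + 2 * a) (1 + a) n j * (x powr a * (1 - x) powr a * x ^ (j + k)))"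
    by (simp add: fun_eq_iff J_def jacobiG_eq_sum_coeff sum_distrib_left sum_distrib_right power_add algebra_simps)
  have int: "integrable lborel_01 (\<lambda>x. jacobi_coeff (1 + 2 * a) (1 + a) n j * (x powr a * (1 - x) powr a * x ^ (j + k)))" for j
    using Beta_weight_moment(1)[OF a, of "j + k"] by simp
  show "integrable lborel_01 (\<lambda>x. x powr a * (1 - x) powr a * J n x * x ^ k)"
    unfolding eq by (intro Bochner_Integration.integrable_sum int)
  assume "k < n"
  have "integral\<^sup>L lborel_01 (\<lambda>x. x powr a * (1 - x) powr a * J n x * x ^ k)
     = (\<Sum>j\<le>n. jacobi_coeff (1 + 2 * a) (1 + a) n j * Beta (1 + a + real (j + k)) (1 + a))"
    unfolding eq using int by (simp add: integral_sum Beta_weight_moment(2)[OF a])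
  also have "\<dots> = 0" using jacobi_coeff_Beta_sum_eq_0[OF a \<open>k < n\<close>] by (simp add: add_ac)
  finally show "integral\<^sup>L lborel_01 (\<lambda>x. x powr a * (1 - x) powr a * J n x * x ^ k) = 0" .
qed

lemma jacobi_product_integral:
  fixes a :: real
  assumes a: "a > 0"
  defines "J \<equiv> jacobiG (1 + 2 * a) (1 + a)"
  shows "integrable lborel_01 (\<lambda>x. x powr a * (1 - x) powr a * J i x * J n x)"
    and "i < n \<Longrightarrow> integral\<^sup>L lborel_01 (\<lambda>x. x powr a * (1 - x) powr a * J i x * J n x) = 0"
proof -
  have eq: "(\<lambda>x. x powr a * (1 - x) powr a * J i x * J n x)
      = (\<lambda>x. \<Sum>k\<le>i. jacobi_coeff (1 + 2 * a) (1 + a) i k * (x powr a * (1 - x) powr a * J n x * x ^ k))"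
    by (simp add: fun_eq_iff J_def jacobiG_eq_sum_coeff[of _ _ i] sum_distrib_left sum_distrib_right algebra_simps)
  have int: "integrable lborel_01 (\<lambda>x. jacobi_coeff (1 + 2 * a) (1 + a) i k * (x powr a * (1 - x) powr a * J n x * x ^ k))" for k
    using jacobi_moment(1)[OF a, of n k] by (simp add: J_def)
  show "integrable lborel_01 (\<lambda>x. x powr a * (1 - x) powr a * J i x * J n x)"
    unfolding eq by (intro Bochner_Integration.integrable_sum int)
  assume "i < n"
  then show "integral\<^sup>L lborel_01 (\<lambda>x. x powr a * (1 - x) powr a * J i x * J n x) = 0"
    unfolding eq using int by (simp add: integral_sum jacobi_moment(2)[OF a] J_def)
qed

lemma jacobi_in_L2w:
  fixes a :: real
  assumes "a > 0"
  shows "in_L2w (\<lambda>x. x powr a * (1 - x) powr a) (jacobiG (1 + 2 * a) (1 + a) n)"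
proof -
  have "jacobiG (1 + 2 * a) (1 + a) n \<in> borel_measurable borel" unfolding jacobiG_def by measurable
  then have "jacobiG (1 + 2 * a) (1 + a) n \<in> borel_measurable lborel_01"
    by (intro measurable_restrict_space1) simp
  then show ?thesis
    using jacobi_product_integral(1)[OF assms, of n n]
    by (simp add: in_L2w_iff_L2_weighted L2_weighted_def power2_eq_square mult.assoc)
qed

lemma jacobi_orthogonal:
  fixes a :: real
  assumes "a > 0" and "i \<noteq> n"
  shows "(LINT x:{0<..<1}|lborel. x powr a * (1 - x) powr a
            * jacobiG (1 + 2 * a) (1 + a) i x * jacobiG (1 + 2 * a) (1 + a) n x) = 0"
proof (cases "i < n")
  case True
  then show ?thesis by (simp add: set_integral_Ioo01_eq jacobi_product_integral(2)[OF assms(1)])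
next
  case False
  then have "n < i" using assms(2) by simp
  then show ?thesis
    using jacobi_product_integral(2)[OF assms(1) \<open>n < i\<close>]
    by (simp add: set_integral_Ioo01_eq mult_ac)
qed

section \<open>Growth of the eigenvalues\<close>

lemma cos_pi_mult_half_less_0:
  fixes \<alpha> :: real
  assumes "1 < \<alpha>" "\<alpha> < 2"
  shows "cos (pi * \<alpha> / 2) < 0"
proof -
  define y where "y = pi * (\<alpha> - 1) / 2"
  have y: "0 < y" "y < pi / 2" using assms by (auto simp: y_def)
  have "cos (pi * \<alpha> / 2) = cos (y + pi / 2)" by (simp add: y_def field_simps)
  also have "\<dots> = - sin y" using minus_sin_cos_eq[of y] by simp
  finally show ?thesis using sin_gt_zero2[OF y] by simp
qed

lemma Gamma_plus1_real: "(z::real) > 0 \<Longrightarrow> Gamma (z + 1) = z * Gamma z"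
  by (rule Gamma_plus1) auto

lemma Gamma_shift_ratio_mono:
  fixes \<alpha> :: real
  assumes "\<alpha> > 0"
  shows "mono (\<lambda>j::nat. Gamma (real j + 1 + \<alpha>) / Gamma (real j + 1))"
proof (rule incseq_SucI)
  fix j :: nat
  have pos: "real j + 1 + \<alpha> > 0" "real j + 1 > 0" using assms by auto
  define r where "r = Gamma (real j + 1 + \<alpha>) / Gamma (real j + 1)"
  have step: "Gamma (real (Suc j) + 1 + \<alpha>) / Gamma (real (Suc j) + 1) = r * ((real j + 1 + \<alpha>) / (real j + 1))"
    using Gamma_plus1_real[OF pos(1)] Gamma_plus1_real[OF pos(2)] pos by (simp add: r_def add_ac field_simps)
  have "r * 1 \<le> r * ((real j + 1 + \<alpha>) / (real j + 1))"
    using assms pos by (intro mult_left_mono) (auto simp: r_def)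
  then show "Gamma (real j + 1 + \<alpha>) / Gamma (real j + 1) \<le> Gamma (real (Suc j) + 1 + \<alpha>) / Gamma (real (Suc j) + 1)"
    unfolding step r_def[symmetric] by simp
qed

text \<open>
With \<open>\<beta> = \<alpha> - 1\<close>, the point \<open>x + 1\<close> divides \<open>[x + \<beta>, x + \<beta> + 1]\<close> in the ratio
\<open>1 - \<beta> : \<beta>\<close>; log-convexity of \<open>\<Gamma>\<close> there, together with \<open>\<Gamma>(z+1) = z \<Gamma>(z)\<close>, gives the bound.
\<close>

lemma powr_mult_Gamma_le_Gamma_shift:
  fixes x \<alpha> :: real
  assumes x: "x > 0" and \<alpha>: "1 \<le> \<alpha>" "\<alpha> \<le> 2"
  shows "Gamma x * x powr \<alpha> \<le> Gamma (x + \<alpha>)"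
proof -
  define \<beta> where "\<beta> = \<alpha> - 1"
  have b: "0 \<le> \<beta>" "\<beta> \<le> 1" using \<alpha> by (auto simp: \<beta>_def)
  let ?L = "\<lambda>z. ln (Gamma z)"
  have xb: "x + \<beta> > 0" using x b by simp
  have ln_Gamma_plus1: "?L (z + 1) = ln z + ?L z" if "z > 0" for z :: real
    using Gamma_plus1_real[OF that] Gamma_real_pos[OF that] by (simp add: ln_mult less_imp_neq[symmetric])
  have "(1 - (1 - \<beta>)) *\<^sub>R (x + \<beta>) + (1 - \<beta>) *\<^sub>R (x + \<beta> + 1) = x + 1"
    by (simp add: algebra_simps)
  then have "?L (x + 1) \<le> \<beta> * ?L (x + \<beta>) + (1 - \<beta>) * ?L (x + \<beta> + 1)"
    using convex_onD[OF log_convex_Gamma_real, of "1 - \<beta>" "x + \<beta>" "x + \<beta> + 1"] b xb by (simp add: o_def)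
  then have convex: "ln x + ?L x \<le> ?L (x + \<beta>) + (1 - \<beta>) * ln (x + \<beta>)"
    unfolding ln_Gamma_plus1[OF x] ln_Gamma_plus1[OF xb] by (simp add: algebra_simps)
  have "\<beta> * ln x \<le> \<beta> * ln (x + \<beta>)" using x b by (intro mult_left_mono) auto
  with convex have "?L x + \<alpha> * ln x \<le> ?L (x + \<beta> + 1)"
    unfolding ln_Gamma_plus1[OF xb] by (simp add: \<beta>_def algebra_simps)
  then have "ln (Gamma x * x powr \<alpha>) \<le> ln (Gamma (x + \<alpha>))"
    using x Gamma_real_pos[OF x] by (simp add: ln_mult ln_powr \<beta>_def add_ac less_imp_neq[symmetric])
  then show ?thesis using x xb by (subst (asm) ln_le_cancel_iff) (auto simp: \<beta>_def add_ac)
qed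

definition fractional_eigenvalue :: "real \<Rightarrow> nat \<Rightarrow> real" where
  "fractional_eigenvalue \<alpha> j = - cos (pi * \<alpha> / 2) * Gamma (real j + 1 + \<alpha>) / Gamma (real j + 1)"

lemma fractional_eigenvalue_pos:
  assumes "1 < \<alpha>" "\<alpha> < 2"
  shows "fractional_eigenvalue \<alpha> j > 0"
  using cos_pi_mult_half_less_0[OF assms] Gamma_real_pos[of "real j + 1 + \<alpha>"] Gamma_real_pos[of "real j + 1"] assms
  by (simp add: fractional_eigenvalue_def mult_neg_pos divide_neg_pos)

lemma mono_fractional_eigenvalue:
  assumes "1 < \<alpha>" "\<alpha> < 2"
  shows "mono (fractional_eigenvalue \<alpha>)"
proof (rule monoI)
  fix i j :: nat
  assume "i \<le> j"
  then show "fractional_eigenvalue \<alpha> i \<le> fractional_eigenvalue \<alpha> j"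
    using monoD[OF Gamma_shift_ratio_mono] cos_pi_mult_half_less_0[OF assms] assms
    unfolding fractional_eigenvalue_def times_divide_eq_right[symmetric]
    by (intro mult_left_mono) auto
qed

lemma inverse_fractional_eigenvalue_le:
  assumes "1 < \<alpha>" "\<alpha> < 2"
  shows "1 / fractional_eigenvalue \<alpha> (N + 1) \<le> 1 / (- cos (pi * \<alpha> / 2)) * (real N + 2) powr (- \<alpha>)"
proof -
  define c where "c = - cos (pi * \<alpha> / 2)"
  have c: "c > 0" using cos_pi_mult_half_less_0[OF assms] by (simp add: c_def)
  have "Gamma (real N + 2) * (real N + 2) powr \<alpha> \<le> Gamma (real N + 2 + \<alpha>)"
    using assms by (intro powr_mult_Gamma_le_Gamma_shift) auto
  then have "c * (real N + 2) powr \<alpha> \<le> fractional_eigenvalue \<alpha> (N + 1)"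
    using c by (simp add: fractional_eigenvalue_def c_def[symmetric] field_simps add_ac)
  then have "1 / fractional_eigenvalue \<alpha> (N + 1) \<le> 1 / (c * (real N + 2) powr \<alpha>)"
    using c fractional_eigenvalue_pos[OF assms] by (intro divide_left_mono) auto
  then show ?thesis by (simp add: c_def[symmetric] powr_minus field_simps)
qed

theorem theorem6p2:
  fixes \<alpha> :: real and \<omega> :: "real \<Rightarrow> real" and G :: "nat \<Rightarrow> real \<Rightarrow> real"
    and lam :: "nat \<Rightarrow> real" and f u :: "real \<Rightarrow> real"
    and fc :: "nat \<Rightarrow> real" and uN :: "nat \<Rightarrow> real \<Rightarrow> real"
  assumes "1 < \<alpha>" and "\<alpha> < 2"
    and "\<And>x. \<omega> x = x powr (\<alpha> / 2) * (1 - x) powr (\<alpha> / 2)"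
    and "\<And>j x. G j x = jacobiG (1 + \<alpha>) (1 + \<alpha> / 2) j x"
    and "\<And>j. lam j = - cos (pi * \<alpha> / 2) * Gamma (real j + 1 + \<alpha>) / Gamma (real j + 1)"
    and "in_L2w \<omega> f"
    and "\<And>j. fc j = (LINT x:{0<..<1}|lborel. \<omega> x * G j x * f x)"
    and "\<And>N x. uN N x = \<omega> x * (\<Sum>j\<le>N. fc j / (lam j * (wnorm \<omega> (G j))\<^sup>2) * G j x)"
    and "in_L2w (\<lambda>x. 1 / \<omega> x) u"
    and "(\<lambda>N. wnorm (\<lambda>x. 1 / \<omega> x) (\<lambda>x. u x - uN N x)) \<longlonglongrightarrow> 0"
  shows "\<exists>C>0. \<forall>N. wnorm (\<lambda>x. 1 / \<omega> x) (\<lambda>x. u x - uN N x) \<le> 1 / lam (N + 1) * wnorm \<omega> f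
              \<and> 1 / lam (N + 1) * wnorm \<omega> f \<le> C * (real N + 2) powr (- \<alpha>) * wnorm \<omega> f"
proof -
  have lam: "lam = fractional_eigenvalue \<alpha>" using assms(5) by (auto simp: fractional_eigenvalue_def)
  have \<omega>: "\<omega> = (\<lambda>x. x powr (\<alpha> / 2) * (1 - x) powr (\<alpha> / 2))" using assms(3) by auto
  have G: "G = jacobiG (1 + 2 * (\<alpha> / 2)) (1 + \<alpha> / 2)" using assms(4) by auto
  have \<omega>_pos: "\<omega> x > 0" if "0 < x" "x < 1" for x using that by (simp add: \<omega>)
  have error: "wnorm (\<lambda>x. 1 / \<omega> x) (\<lambda>x. u x - uN N x) \<le> 1 / lam (N + 1) * wnorm \<omega> f" for N
  proof (rule orthogonal_expansion_truncation_error[OF _ \<omega>_pos _ _ _ _ assms(6-10)])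
    show "\<omega> \<in> borel_measurable lborel_01" unfolding \<omega> by (intro measurable_restrict_space1) measurable
    show "in_L2w \<omega> (G j)" for j unfolding \<omega> G using assms(1) by (intro jacobi_in_L2w) simp
    show "(LINT x:{0<..<1}|lborel. \<omega> x * G i x * G j x) = 0" if "i \<noteq> j" for i j
      unfolding \<omega> G using assms(1) that by (intro jacobi_orthogonal) auto
  qed (use assms(1,2) in \<open>simp_all add: lam fractional_eigenvalue_pos mono_fractional_eigenvalue\<close>)
  show ?thesis
  proof (intro exI[of _ "1 / (- cos (pi * \<alpha> / 2))"] conjI allI)
    show "1 / (- cos (pi * \<alpha> / 2)) > 0" using cos_pi_mult_half_less_0[OF assms(1,2)] by simp
    fix N
    show "1 / lam (N + 1) * wnorm \<omega> f \<le> 1 / (- cos (pi * \<alpha> / 2)) * (real N + 2) powr (- \<alpha>) * wnorm \<omega> f"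
      unfolding lam using inverse_fractional_eigenvalue_le[OF assms(1,2)] \<omega>_pos
      by (intro mult_right_mono wnorm_nonneg) (auto intro: less_imp_le)
  qed (rule error)
qed

end
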